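(* Let $R$ be an orientable flat surface given by a holomorphic Abelian differential on a compact genus $g$ surface, and let $T$ be a geodesic triangulation of $R$ (by saddle connections, vertices at zeros). Orient each edge of $T$ so that its $x$-component is positive (for vertical edges the orientation is not defined). Let $W$ be a subset of the edges of $T$. Then there exists an integral multicurve $\Delta$ on $R$ such that: (a) $\Delta$ is disjoint from the vertices of $T$ and transverse to the edges; (b) $\Delta$ crosses each edge of $W$ at least once; (c) each time $\Delta$ crosses an edge $e\in W$, the crossing is from left to right with respect to the orientation of $e$; if $e$ is vertical, all crossings are from the same side; (d) for each edge $e$ of $T$, the intersection number $i(\Delta,e)\le n$, where $n$ depends only on $g$.
   Context: An integral multicurve is a finite set of oriented closed curves with integer weights (a negative weight corresponds to reversing orientation). The $x$-component of an edge refers to the real part of its holonomy (period of the Abelian differential along it). *)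

theory Defs
  imports "HOL-Analysis.Analysis"
begin

text \<open>A half-edge (side) is a pair
  (t,i) with t in Tris and i in {0,1,2}; hol h is the holonomy (period of the Abelian
  differential) of side h, traversed counterclockwise around its triangle, so that the
  triangle lies to the LEFT of hol h.  glue h is the side of the adjacent triangle glued
  to h (same saddle connection, opposite direction).\<close>

type_synonym hedge = "nat \<times> nat"

definition hedges :: "nat set \<Rightarrow> hedge set" where
  "hedges Tris = Tris \<times> {0,1,2}"

definition nxt :: "hedge \<Rightarrow> hedge" where
  "nxt h = (fst h, (snd h + 1) mod 3)"

definition prv :: "hedge \<Rightarrow> hedge" where
  "prv h = (fst h, (snd h + 2) mod 3)"

text \<open>Rotation around the vertex at the start point of a half-edge.\<close>
definition rot :: "(hedge \<Rightarrow> hedge) \<Rightarrow> hedge \<Rightarrow> hedge" where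
  "rot glue h = nxt (glue h)"

text \<open>Vertices of the triangulation = classes of corners (start points of half-edges).\<close>
definition vertex_classes :: "nat set \<Rightarrow> (hedge \<Rightarrow> hedge) \<Rightarrow> hedge set set" where
  "vertex_classes Tris glue = hedges Tris // ({(h, rot glue h) | h. h \<in> hedges Tris}\<^sup>*)"

text \<open>Interior angle of the triangle at the start point of side h.\<close>
definition corner_angle :: "(hedge \<Rightarrow> complex) \<Rightarrow> hedge \<Rightarrow> real" where
  "corner_angle hol h = Arg (- hol (prv h) / hol h)"

definition cone_angle :: "(hedge \<Rightarrow> complex) \<Rightarrow> hedge set \<Rightarrow> real" where
  "cone_angle hol C = (\<Sum>h\<in>C. corner_angle hol h)"

definition edges :: "nat set \<Rightarrow> (hedge \<Rightarrow> hedge) \<Rightarrow> hedge set set" where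
  "edges Tris glue = {{h, glue h} | h. h \<in> hedges Tris}"

text \<open>Tris, hol, glue describe a geodesic triangulation (by saddle connections, vertices
  at the zeros) of a connected compact translation surface (= surface with a holomorphic
  Abelian differential) of genus g.\<close>
definition flat_triangulation ::
  "nat \<Rightarrow> nat set \<Rightarrow> (hedge \<Rightarrow> complex) \<Rightarrow> (hedge \<Rightarrow> hedge) \<Rightarrow> bool" where
  "flat_triangulation g Tris hol glue \<longleftrightarrow>
     finite Tris \<and> Tris \<noteq> {} \<and>
     (\<forall>t\<in>Tris. hol (t,0) + hol (t,1) + hol (t,2) = 0 \<and>
                Im (cnj (hol (t,0)) * hol (t,1)) > 0) \<and>
     (\<forall>h\<in>hedges Tris. glue h \<in> hedges Tris \<and> glue (glue h) = h \<and> glue h \<noteq> h \<and>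
                      hol (glue h) = - hol h) \<and>
     \<comment> \<open>connectedness of the surface\<close>
     (\<forall>t\<in>Tris. \<forall>t'\<in>Tris.
        (t, t') \<in> {(fst h, fst (glue h)) | h. h \<in> hedges Tris}\<^sup>*) \<and>
     \<comment> \<open>Euler characteristic: V - E + F = 2 - 2g\<close>
     int (card (vertex_classes Tris glue)) - int (card (edges Tris glue)) + int (card Tris)
        = 2 - 2 * int g \<and>
     \<comment> \<open>every vertex is a zero of the differential (cone angle different from 2 pi)\<close>
     (\<forall>C\<in>vertex_classes Tris glue. cone_angle hol C \<noteq> 2 * pi)"

text \<open>A closed curve transverse to the edges and disjoint from the vertices, recorded by the
  cyclic sequence of sides through which it successively exits triangles.  After exiting
  through h it is in triangle fst (glue h), which it must exit next.\<close>
definition transverse_closed_curve :: "nat set \<Rightarrow> (hedge \<Rightarrow> hedge) \<Rightarrow> hedge list \<Rightarrow> bool" where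
  "transverse_closed_curve Tris glue c \<longleftrightarrow>
     c \<noteq> [] \<and> set c \<subseteq> hedges Tris \<and>
     (\<forall>j < length c. fst (c ! ((j + 1) mod length c)) = fst (glue (c ! j)))"

text \<open>An integral multicurve: finitely many oriented closed curves with integer weights
  (negative weight = reversed orientation).\<close>
type_synonym multicurve = "(int \<times> hedge list) list"

definition transverse_multicurve :: "nat set \<Rightarrow> (hedge \<Rightarrow> hedge) \<Rightarrow> multicurve \<Rightarrow> bool" where
  "transverse_multicurve Tris glue \<Delta> \<longleftrightarrow> (\<forall>(w, c)\<in>set \<Delta>. transverse_closed_curve Tris glue c)"

text \<open>Side through which the weighted component actually exits (orientation reversed if w < 0).
  Exiting the triangle through h means crossing the edge from the left to the right of hol h.\<close>
definition eff_exit :: "(hedge \<Rightarrow> hedge) \<Rightarrow> int \<Rightarrow> hedge \<Rightarrow> hedge" where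
  "eff_exit glue w h = (if w > 0 then h else glue h)"

definition crossing_exits :: "(hedge \<Rightarrow> hedge) \<Rightarrow> multicurve \<Rightarrow> hedge set \<Rightarrow> hedge set" where
  "crossing_exits glue \<Delta> e =
     {eff_exit glue w h | w c h. (w, c) \<in> set \<Delta> \<and> w \<noteq> 0 \<and> h \<in> set c \<and> h \<in> e}"

definition inter_num :: "multicurve \<Rightarrow> hedge set \<Rightarrow> int" where
  "inter_num \<Delta> e = sum_list (map (\<lambda>(w, c). \<bar>w\<bar> * int (length (filter (\<lambda>h. h \<in> e) c))) \<Delta>)"

end

theory Submission
  imports Defs "HOL-Library.Real_Mod" "HOL-Combinatorics.Permutations"
begin

(* Tilting the x-component of the holonomy slightly gives a real cocycle L on the sides of the
  triangles: it sums to zero around every triangle, changes sign under gluing, vanishes on no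
  side, and is positive only on sides with non-negative x-component.  Call a side positive if L
  is positive on it.  If a set S of triangles is closed under exiting through positive sides,
  then every side through which one leaves S is negative; but the sum of L over these sides is
  the total flux out of S, which is zero, so there are none.  Applied to the triangles reachable
  from behind a positive side h, this closes up a transverse curve through h that exits every
  triangle through a positive side and visits each triangle at most once.  One such curve per
  edge of W crosses every edge at most 2|W| <= 6F times, F the number of triangles.  Finally
  F <= 8g: the holonomy around a vertex is trivial, so its cone angle is a multiple of 2 pi,
  hence at least 4 pi at a zero; summing angles gives 4 pi V <= pi F, and with 3F = 2E the
  Euler characteristic yields 2 - 2g = V - E + F <= -F/4. *)

section \<open>Half-edges, edges and exit paths\<close>

lemma mem_hedges_iff: "h \<in> hedges T \<longleftrightarrow> fst h \<in> T \<and> snd h \<in> {0,1,2}"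
  by (cases h) (auto simp: hedges_def)

lemma card_hedges: "card (hedges T) = 3 * card T"
  by (simp add: hedges_def card_cartesian_product)

lemma finite_hedges: "finite T \<Longrightarrow> finite (hedges T)"
  by (simp add: hedges_def)

lemma edges_eq_image: "edges T gl = (\<lambda>h. {h, gl h}) ` hedges T"
  by (auto simp: edges_def)

lemma finite_edges: "finite T \<Longrightarrow> finite (edges T gl)"
  by (simp add: edges_eq_image finite_hedges)

lemma card_edges_le: "finite T \<Longrightarrow> card (edges T gl) \<le> 3 * card T"
  using card_image_le[OF finite_hedges] by (metis card_hedges edges_eq_image)

lemma three_card_le_two_card_edges:
  assumes "finite T"
  shows "3 * card T \<le> 2 * card (edges T gl)"
proof -
  have "hedges T \<subseteq> \<Union>(edges T gl)" by (auto simp: edges_def)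
  then have "card (hedges T) \<le> card (\<Union>(edges T gl))"
    using assms by (intro card_mono) (auto simp: edges_eq_image finite_hedges)
  also have "\<dots> \<le> (\<Sum>e\<in>edges T gl. card e)" by (rule card_Union_le_sum_card)
  also have "\<dots> \<le> of_nat (card (edges T gl)) * 2"
    by (rule sum_bounded_above) (auto simp: edges_def card_insert_le_m1)
  finally show ?thesis by (simp add: card_hedges)
qed

lemma prv_nxt: "h \<in> hedges T \<Longrightarrow> prv (nxt h) = h"
  by (cases h) (auto simp: mem_hedges_iff prv_def nxt_def)

lemma prv_simps: "prv (t,0) = (t,2)" "prv (t,1) = (t,0)" "prv (t,2) = (t,1)"
  by (simp_all add: prv_def)

lemma hedges_cases:
  assumes "h \<in> hedges T"
  obtains t where "t \<in> T" "h = (t,0)" | t where "t \<in> T" "h = (t,1)" | t where "t \<in> T" "h = (t,2)"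
  using assms by (cases h) (auto simp: hedges_def)

lemma nxt_in_hedges: "h \<in> hedges T \<Longrightarrow> nxt h \<in> hedges T"
  by (cases h) (auto simp: mem_hedges_iff nxt_def)

fun exit_path :: "(hedge \<Rightarrow> hedge) \<Rightarrow> nat \<Rightarrow> hedge list \<Rightarrow> nat \<Rightarrow> bool" where
  "exit_path gl a [] b \<longleftrightarrow> a = b"
| "exit_path gl a (h # p) b \<longleftrightarrow> fst h = a \<and> exit_path gl (fst (gl h)) p b"

lemma exit_path_append:
  "exit_path gl a (p @ q) b \<longleftrightarrow> (\<exists>m. exit_path gl a p m \<and> exit_path gl m q b)"
  by (induction p arbitrary: a) auto

lemma exit_path_nth:
  assumes "exit_path gl a p b" and "j < length p"
  shows "fst (gl (p ! j)) = (if Suc j < length p then fst (p ! Suc j) else b)"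
  using assms
proof (induction p arbitrary: a j)
  case (Cons h p)
  then show ?case by (cases j; cases p) auto
qed simp

lemma transverse_closed_curve_if_exit_loop:
  assumes "exit_path gl (fst h) (h # p) (fst h)" and "set (h # p) \<subseteq> hedges T"
  shows "transverse_closed_curve T gl (h # p)"
  unfolding transverse_closed_curve_def
proof (intro conjI allI impI)
  fix j assume j: "j < length (h # p)"
  show "fst ((h # p) ! ((j + 1) mod length (h # p))) = fst (gl ((h # p) ! j))"
  proof (cases "Suc j < length (h # p)")
    case True then show ?thesis using exit_path_nth[OF assms(1) j] by simp
  next
    case False
    then have "Suc j = length (h # p)" using j by simp
    then show ?thesis using exit_path_nth[OF assms(1) j] by simp
  qed
qed (use assms(2) in auto)

lemma length_filter_mem_le_card:
  assumes "distinct xs" and "finite A"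
  shows "length (filter (\<lambda>x. x \<in> A) xs) \<le> card A"
proof -
  have "length (filter (\<lambda>x. x \<in> A) xs) = card (set (filter (\<lambda>x. x \<in> A) xs))"
    using assms(1) by (metis distinct_card distinct_filter)
  also have "\<dots> \<le> card A" using assms(2) by (intro card_mono) auto
  finally show ?thesis .
qed

lemma crossing_exits_unit_weights:
  "crossing_exits gl (map (Pair 1) cs) e = {h \<in> e. \<exists>c\<in>set cs. h \<in> set c}"
  unfolding crossing_exits_def eff_exit_def by (auto intro!: exI[of _ "1::int"]) blast

lemma inter_num_unit_weights:
  "inter_num (map (Pair 1) cs) e = (\<Sum>c\<leftarrow>cs. int (length (filter (\<lambda>h. h \<in> e) c)))"
  by (simp add: inter_num_def o_def)

section \<open>Positive cycles of a nonvanishing cocycle\<close>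

locale nonvanishing_cocycle =
  fixes T :: "nat set" and gl :: "hedge \<Rightarrow> hedge" and L :: "hedge \<Rightarrow> real"
  assumes finite_T: "finite T"
    and glue_in: "\<And>h. h \<in> hedges T \<Longrightarrow> gl h \<in> hedges T"
    and glue_inv: "\<And>h. h \<in> hedges T \<Longrightarrow> gl (gl h) = h"
    and L_glue: "\<And>h. h \<in> hedges T \<Longrightarrow> L (gl h) = - L h"
    and L_nonzero: "\<And>h. h \<in> hedges T \<Longrightarrow> L h \<noteq> 0"
    and L_triangle: "\<And>t. t \<in> T \<Longrightarrow> L (t,0) + L (t,1) + L (t,2) = 0"
begin

lemma exit_path_end_in:
  "exit_path gl a p b \<Longrightarrow> a \<in> T \<Longrightarrow> set p \<subseteq> hedges T \<Longrightarrow> b \<in> T"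
proof (induction p arbitrary: a)
  case (Cons h p)
  then have "fst (gl h) \<in> T" using glue_in by (simp add: mem_hedges_iff)
  then show ?case using Cons by auto
qed simp

lemma outflow_eq_zero:
  assumes "S \<subseteq> T"
  shows "(\<Sum>x\<in>{x \<in> S \<times> {0,1,2}. fst (gl x) \<notin> S}. L x) = 0"
proof -
  let ?A = "S \<times> {0::nat,1,2}"
  let ?I = "{x \<in> ?A. fst (gl x) \<in> S}" and ?B = "{x \<in> ?A. fst (gl x) \<notin> S}"
  have "finite S" using assms finite_T by (rule finite_subset)
  then have fin: "finite ?A" by simp
  have A_hedges: "?A \<subseteq> hedges T" using assms by (auto simp: hedges_def)
  have "sum L ?A = (\<Sum>t\<in>S. L (t,0) + L (t,1) + L (t,2))"
    by (simp add: sum.cartesian_product' add.assoc)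
  also have "\<dots> = 0" using L_triangle assms by (intro sum.neutral) auto
  finally have total: "sum L ?A = 0" .
  have I_hedges: "x \<in> hedges T" if "x \<in> ?I" for x
    using that A_hedges by auto
  have glue_I: "gl x \<in> ?I" if "x \<in> ?I" for x
  proof -
    have x: "x \<in> hedges T" "fst x \<in> S" "fst (gl x) \<in> S" using that I_hedges by auto
    then have "gl x \<in> ?A" using glue_in[OF x(1)] by (simp add: mem_hedges_iff mem_Times_iff)
    then show ?thesis using x glue_inv[OF x(1)] by simp
  qed
  have glue_inv_I: "gl (gl x) = x" if "x \<in> ?I" for x
    using glue_inv[OF I_hedges[OF that]] .
  have "sum L ?I = sum (L \<circ> gl) ?I"
    by (rule sum.reindex_bij_witness[where i=gl and j=gl]) (simp_all only: glue_I glue_inv_I comp_apply)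
  also have "\<dots> = - sum L ?I"
    unfolding sum_negf[symmetric] using L_glue I_hedges by (intro sum.cong) auto
  finally have internal: "sum L ?I = 0" by simp
  have "sum L ?A = sum L (?I \<union> ?B)" by (rule sum.cong) auto
  also have "\<dots> = sum L ?I + sum L ?B" using fin by (intro sum.union_disjoint) auto
  finally show ?thesis using total internal by simp
qed

lemma closed_if_positively_closed:
  assumes "S \<subseteq> T"
    and pos_closed: "\<And>h. h \<in> hedges T \<Longrightarrow> fst h \<in> S \<Longrightarrow> 0 < L h \<Longrightarrow> fst (gl h) \<in> S"
    and "h \<in> hedges T" and "fst h \<in> S"
  shows "fst (gl h) \<in> S"
proof (rule ccontr)
  assume out: "fst (gl h) \<notin> S"
  let ?B = "{x \<in> S \<times> {0,1,2}. fst (gl x) \<notin> S}"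
  have "finite ?B" using assms(1) finite_T finite_subset by fastforce
  moreover have "h \<in> ?B" using assms(3,4) out by (auto simp: mem_hedges_iff mem_Times_iff)
  moreover have "0 < - L x" if "x \<in> ?B" for x
    using that assms(1) pos_closed[of x] L_nonzero[of x] by (force simp: mem_hedges_iff)
  ultimately have "0 < (\<Sum>x\<in>?B. - L x)" by (intro sum_pos) auto
  then show False using outflow_eq_zero[OF assms(1)] by (simp add: sum_negf)
qed

definition simple_positive_path :: "hedge list \<Rightarrow> nat \<Rightarrow> nat \<Rightarrow> bool" where
  "simple_positive_path p a b \<longleftrightarrow> set p \<subseteq> hedges T \<and> (\<forall>x\<in>set p. 0 < L x) \<and>
     exit_path gl a p b \<and> distinct (map fst p) \<and> b \<notin> fst ` set p"

lemma simple_positive_path_extend: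
  assumes path: "simple_positive_path p a b" and h: "h \<in> hedges T" "fst h = b" "0 < L h"
  shows "\<exists>q. simple_positive_path q a (fst (gl h))"
proof -
  let ?b = "fst (gl h)"
  consider "?b = b" | "?b \<in> fst ` set p" | "?b \<noteq> b" "?b \<notin> fst ` set p" by blast
  then show ?thesis
  proof cases
    case 1
    then show ?thesis using path by auto
  next
    case 2
    \<comment> \<open>the path already visits the new triangle: cut it there\<close>
    then obtain x where x: "x \<in> set p" "fst x = ?b" by auto
    then obtain p1 p2 where p: "p = p1 @ x # p2" by (meson split_list)
    with path obtain m where "exit_path gl a p1 m" "exit_path gl m (x # p2) b"
      by (auto simp: simple_positive_path_def exit_path_append)
    then have "simple_positive_path p1 a ?b"
      using path p x by (auto simp: simple_positive_path_def)
    then show ?thesis by blast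
  next
    case 3
    have "exit_path gl a (p @ [h]) ?b"
      using path h by (auto simp: simple_positive_path_def exit_path_append)
    then have "simple_positive_path (p @ [h]) a ?b"
      using path h 3 by (auto simp: simple_positive_path_def)
    then show ?thesis by blast
  qed
qed

lemma positive_cycle_through:
  assumes h: "h \<in> hedges T" "0 < L h"
  obtains c where "transverse_closed_curve T gl c" "distinct c" "\<forall>x\<in>set c. 0 < L x" "h \<in> set c"
proof -
  define a where "a = fst (gl h)"
  define S where "S = {b. \<exists>p. simple_positive_path p a b}"
  have "a \<in> T" using glue_in[OF h(1)] by (simp add: a_def mem_hedges_iff)
  then have S_sub: "S \<subseteq> T"
    using exit_path_end_in by (auto simp: S_def simple_positive_path_def)
  have "fst (gl x) \<in> S" if "x \<in> hedges T" "fst x \<in> S" for x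
  proof (rule closed_if_positively_closed[OF S_sub _ that])
    fix y assume y: "y \<in> hedges T" "fst y \<in> S" "0 < L y"
    then obtain p where "simple_positive_path p a (fst y)" by (auto simp: S_def)
    then show "fst (gl y) \<in> S"
      unfolding S_def using simple_positive_path_extend y by blast
  qed
  moreover have "a \<in> S"
    unfolding S_def by (rule CollectI, rule exI[of _ "[]"]) (simp add: simple_positive_path_def)
  ultimately have "fst (gl (gl h)) \<in> S" using glue_in[OF h(1)] by (simp add: a_def)
  then obtain p where path: "simple_positive_path p a (fst h)"
    using glue_inv[OF h(1)] by (auto simp: S_def)
  then have "exit_path gl (fst h) (h # p) (fst h)" and "set (h # p) \<subseteq> hedges T"
    using h by (auto simp: simple_positive_path_def a_def)
  then have "transverse_closed_curve T gl (h # p)" by (rule transverse_closed_curve_if_exit_loop)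
  moreover have "distinct (h # p)" using path by (auto simp: simple_positive_path_def distinct_map)
  ultimately show thesis using that path h by (auto simp: simple_positive_path_def)
qed

lemma edge_subset_hedges: "e \<in> edges T gl \<Longrightarrow> e \<subseteq> hedges T"
  using glue_in by (auto simp: edges_def)

lemma unique_positive_side:
  assumes "e \<in> edges T gl"
  obtains h0 where "h0 \<in> e" "{x \<in> e. 0 < L x} = {h0}"
proof -
  obtain h where h: "h \<in> hedges T" "e = {h, gl h}" using assms by (auto simp: edges_def)
  show thesis
  proof (cases "0 < L h")
    case True
    then have "{x \<in> e. 0 < L x} = {h}" using h L_glue[of h] by auto
    then show thesis using that h by blast
  next
    case False
    then have "{x \<in> e. 0 < L x} = {gl h}" using h L_glue[of h] L_nonzero[of h] by auto
    then show thesis using that h by blast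
  qed
qed

lemma positive_multicurve:
  assumes W: "W \<subseteq> edges T gl"
  obtains \<Delta> where "transverse_multicurve T gl \<Delta>"
    "\<forall>e\<in>W. \<exists>h0\<in>e. 0 < L h0 \<and> crossing_exits gl \<Delta> e = {h0}"
    "\<forall>e\<in>edges T gl. inter_num \<Delta> e \<le> 2 * int (card W)"
proof -
  have "\<exists>c. transverse_closed_curve T gl c \<and> distinct c \<and> (\<forall>x\<in>set c. 0 < L x) \<and>
            (\<exists>h\<in>e. h \<in> set c)" if "e \<in> W" for e
  proof -
    obtain h where "h \<in> e" "{x \<in> e. 0 < L x} = {h}"
      using unique_positive_side[of e] W \<open>e \<in> W\<close> by blast
    then have "h \<in> e" "0 < L h" by auto
    moreover have "h \<in> hedges T" using edge_subset_hedges W that \<open>h \<in> e\<close> by blast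
    ultimately show ?thesis using positive_cycle_through by metis
  qed
  then obtain cyc where cyc: "\<And>e. e \<in> W \<Longrightarrow> transverse_closed_curve T gl (cyc e) \<and>
      distinct (cyc e) \<and> (\<forall>x\<in>set (cyc e). 0 < L x) \<and> (\<exists>h\<in>e. h \<in> set (cyc e))"
    by metis
  have "finite W" using W finite_edges[OF finite_T] finite_subset by blast
  then obtain ws where ws: "set ws = W" "distinct ws" using finite_distinct_list by blast
  define \<Delta> :: multicurve where "\<Delta> = map (Pair 1) (map cyc ws)"
  have exits: "crossing_exits gl \<Delta> e = {h \<in> e. \<exists>e'\<in>W. h \<in> set (cyc e')}" for e
    unfolding \<Delta>_def crossing_exits_unit_weights using ws(1) by auto
  have "inter_num \<Delta> e \<le> 2 * int (card W)" if "e \<in> edges T gl" for e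
  proof -
    have "card e \<le> 2" using that by (auto simp: edges_def card_insert_le_m1)
    then have crossings: "int (length (filter (\<lambda>h. h \<in> e) (cyc e'))) \<le> 2" if "e' \<in> W" for e'
      using length_filter_mem_le_card[of "cyc e'" e] cyc[OF that] \<open>e \<in> edges T gl\<close>
      by (auto simp: edges_def)
    have "inter_num \<Delta> e = (\<Sum>e'\<leftarrow>ws. int (length (filter (\<lambda>h. h \<in> e) (cyc e'))))"
      unfolding \<Delta>_def inter_num_unit_weights by (simp add: o_def)
    also have "\<dots> \<le> (\<Sum>e'\<leftarrow>ws. 2)" by (rule sum_list_mono) (use crossings ws(1) in auto)
    also have "\<dots> = 2 * int (card W)" using ws distinct_card[of ws] by (simp add: sum_list_triv)
    finally show ?thesis .
  qed
  moreover have "\<exists>h0\<in>e. 0 < L h0 \<and> crossing_exits gl \<Delta> e = {h0}" if "e \<in> W" for e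
  proof -
    have "e \<in> edges T gl" using W that by blast
    then obtain h0 where h0: "h0 \<in> e" "{x \<in> e. 0 < L x} = {h0}" by (rule unique_positive_side)
    have "crossing_exits gl \<Delta> e \<subseteq> {x \<in> e. 0 < L x}" using cyc by (auto simp: exits)
    moreover have "crossing_exits gl \<Delta> e \<noteq> {}" using cyc[OF that] that by (auto simp: exits)
    ultimately show ?thesis unfolding h0(2) using h0 by (auto simp: subset_singleton_iff)
  qed
  moreover have "transverse_multicurve T gl \<Delta>"
    using cyc ws(1) by (auto simp: \<Delta>_def transverse_multicurve_def)
  ultimately show thesis using that by blast
qed

end

section \<open>Orbits of a permutation of a finite set\<close>

definition step_rel :: "('a \<Rightarrow> 'a) \<Rightarrow> 'a set \<Rightarrow> ('a \<times> 'a) set" where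
  "step_rel f A = {(a, f a) | a. a \<in> A}"

lemma step_rel_iff: "(x, y) \<in> step_rel f A \<longleftrightarrow> x \<in> A \<and> y = f x"
  by (auto simp: step_rel_def)

lemma vertex_classes_step_rel:
  "vertex_classes T gl = hedges T // (step_rel (rot gl) (hedges T))\<^sup>*"
  by (simp add: vertex_classes_def step_rel_def)

context
  fixes f :: "'a \<Rightarrow> 'a" and A :: "'a set"
  assumes bij_f: "bij_betw f A A"
begin

lemma funpow_in: "x \<in> A \<Longrightarrow> (f ^^ n) x \<in> A"
  using bij_betw_funpow[OF bij_f] by (blast dest: bij_betwE)

lemma funpow_returns:
  assumes "finite A" and "x \<in> A"
  obtains n where "0 < n" "(f ^^ n) x = x"
proof -
  let ?p = "restrict_id f A"
  have "permutation ?p"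
    using permutes_restrict_id[OF bij_f] assms(1) permutation_permutes by blast
  then obtain n where "0 < n" "(?p ^^ n) x = x" by (rule permutation_self)
  moreover have "(?p ^^ k) x = (f ^^ k) x" for k
    using funpow_in[OF assms(2)] by (induction k) auto
  ultimately show thesis using that by simp
qed

lemma step_rel_rtrancl_funpow: "x \<in> A \<Longrightarrow> (x, (f ^^ n) x) \<in> (step_rel f A)\<^sup>*"
proof (induction n)
  case (Suc n)
  then have "((f ^^ n) x, (f ^^ Suc n) x) \<in> step_rel f A"
    using funpow_in by (simp add: step_rel_iff)
  with Suc show ?case by (meson rtrancl_into_rtrancl)
qed simp

lemma step_rel_rtrancl_sym:
  assumes "finite A" and "(x, y) \<in> (step_rel f A)\<^sup>*"
  shows "(y, x) \<in> (step_rel f A)\<^sup>*"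
  using assms(2)
proof (induction rule: rtrancl_induct)
  case (step y z)
  then have y: "y \<in> A" and z: "z = f y" by (auto simp: step_rel_iff)
  obtain n where "0 < n" "(f ^^ n) y = y" using funpow_returns[OF assms(1) y] .
  then have "(f ^^ (n - 1)) z = y"
    using z funpow_Suc_right[of "n - 1" f] by (simp del: funpow.simps)
  moreover have "z \<in> A" using y z bij_betwE[OF bij_f] by blast
  ultimately have "(z, y) \<in> (step_rel f A)\<^sup>*" using step_rel_rtrancl_funpow[of z "n - 1"] by simp
  with step.IH show ?case by (meson rtrancl_trans)
qed simp

lemma step_rel_class_subset: "x \<in> A \<Longrightarrow> (step_rel f A)\<^sup>* `` {x} \<subseteq> A"
proof
  fix y assume "x \<in> A" "y \<in> (step_rel f A)\<^sup>* `` {x}"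
  then have "(x, y) \<in> (step_rel f A)\<^sup>*" "x \<in> A" by auto
  then show "y \<in> A" using bij_betwE[OF bij_f] by induction (auto simp: step_rel_iff)
qed

lemma sum_step_rel_classes:
  assumes "finite A"
  shows "(\<Sum>C \<in> A // (step_rel f A)\<^sup>*. sum g C) = sum g A"
proof -
  let ?R = "(step_rel f A)\<^sup>*"
  have classes: "C \<subseteq> A" if "C \<in> A // ?R" for C
    using that step_rel_class_subset by (auto elim: quotientE)
  have class_mono: "?R `` {u} \<subseteq> ?R `` {v}" if "(v, u) \<in> ?R" for u v
    using rtrancl_trans[OF that] by blast
  have disjoint: "C = D" if CD: "C \<in> A // ?R" "D \<in> A // ?R" and z: "z \<in> C" "z \<in> D" for C D z
  proof -
    obtain x y where C: "C = ?R `` {x}" and D: "D = ?R `` {y}"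
      using CD by (auto elim!: quotientE)
    then have "(x, z) \<in> ?R" "(z, y) \<in> ?R"
      using z step_rel_rtrancl_sym[OF assms, of y z] by auto
    then have "(x, y) \<in> ?R" "(y, x) \<in> ?R"
      using step_rel_rtrancl_sym[OF assms] rtrancl_trans by metis+
    then show ?thesis unfolding C D using class_mono by blast
  qed
  have "A = \<Union>(A // ?R)" using classes by (auto simp: quotient_def)
  then have "sum g A = sum g (\<Union>(A // ?R))" by simp
  also have "\<dots> = (\<Sum>C \<in> A // ?R. sum g C)"
  proof (rule sum.Union_disjoint[unfolded comp_def])
    show "\<forall>C\<in>A // ?R. finite C" using classes assms(1) finite_subset by blast
    show "\<forall>C\<in>A // ?R. \<forall>D\<in>A // ?R. C \<noteq> D \<longrightarrow> C \<inter> D = {}" using disjoint by blast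
  qed
  finally show ?thesis by simp
qed

end

section \<open>Angles and small perturbations\<close>

lemma cis_sum_Arg:
  assumes "finite A" "\<And>x. x \<in> A \<Longrightarrow> z x \<noteq> 0"
  shows "cis (\<Sum>x\<in>A. Arg (z x)) = sgn (\<Prod>x\<in>A. z x)"
  using assms by (induction rule: finite_induct) (auto simp: cis_mult[symmetric] cis_Arg sgn_mult)

lemma triangle_orientation:
  fixes a b c :: complex
  assumes "a + b + c = 0" and "0 < Im (cnj a * b)"
  shows "0 < Im (cnj b * c)" and "0 < Im (cnj c * a)"
proof -
  have c: "c = - a - b" using assms(1) by (simp add: eq_neg_iff_add_eq_0 algebra_simps)
  have "Im (cnj b * c) = Im (cnj a * b)" and "Im (cnj c * a) = Im (cnj a * b)"
    unfolding c by (simp_all add: algebra_simps)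
  then show "0 < Im (cnj b * c)" and "0 < Im (cnj c * a)" using assms(2) by simp_all
qed

lemma Arg_neg_divide_bounds:
  assumes "0 < Im (cnj x * y)"
  shows "0 < Arg (- x / y)" and "Arg (- x / y) < pi"
proof -
  have "y \<noteq> 0" using assms by auto
  then have "0 < Im (cnj x * y) / (cmod y)\<^sup>2" using assms by simp
  also have "Im (cnj x * y) / (cmod y)\<^sup>2 = Im (- x / y)"
    by (simp add: Im_divide cmod_power2 divide_simps)
  finally show "0 < Arg (- x / y)" and "Arg (- x / y) < pi" using Arg_lt_pi by blast+
qed

lemma Arg_triangle_sum:
  fixes a b c :: complex
  assumes "a + b + c = 0" and "0 < Im (cnj a * b)"
  shows "Arg (- c / a) + Arg (- a / b) + Arg (- b / c) = pi"
proof -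
  note orient = assms(2) triangle_orientation[OF assms]
  define s where "s = Arg (- c / a) + Arg (- a / b) + Arg (- b / c)"
  have "a \<noteq> 0" "b \<noteq> 0" "c \<noteq> 0" using orient by auto
  then have "cis s = sgn ((- c / a) * (- a / b) * (- b / c))"
    by (simp add: s_def cis_mult[symmetric] cis_Arg sgn_mult sgn_zero_iff)
  also have "\<dots> = -1" using \<open>a \<noteq> 0\<close> \<open>b \<noteq> 0\<close> \<open>c \<noteq> 0\<close> by (simp add: field_simps)
  finally have "cis (s - pi) = 1" by (simp add: cis_divide[symmetric])
  then obtain n :: int where n: "s - pi = of_int n * (2 * pi)" using cis_eq_1_iff by blast
  have "0 < Arg (- c / a)" "0 < Arg (- a / b)" "0 < Arg (- b / c)"
    and "Arg (- c / a) < pi" "Arg (- a / b) < pi" "Arg (- b / c) < pi"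
    using Arg_neg_divide_bounds orient by blast+
  then have "0 < s" "s < 3 * pi" unfolding s_def by linarith+
  moreover have "s = pi * (1 + 2 * real_of_int n)" using n by (simp add: algebra_simps)
  ultimately have "0 < 1 + 2 * real_of_int n" "1 + 2 * real_of_int n < 3"
    by (simp_all add: zero_less_mult_iff mult.commute[of 3 pi] mult_less_cancel_left_pos)
  then have "n = 0" by linarith
  then show ?thesis using n by (simp add: s_def)
qed

lemma eventually_sgn_add_small:
  fixes a b :: real
  assumes "a \<noteq> 0"
  shows "\<forall>\<^sub>F \<delta> in at_right 0. sgn (a + \<delta> * b) = sgn a"
proof -
  have lim: "((\<lambda>\<delta>. a + \<delta> * b) \<longlongrightarrow> a) (at_right 0)"
    by (auto intro!: tendsto_eq_intros)
  show ?thesis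
  proof (cases "0 < a")
    case True
    show ?thesis using order_tendstoD(1)[OF lim True] by (rule eventually_mono) (simp add: True)
  next
    case False
    then have "a < 0" using assms by simp
    show ?thesis using order_tendstoD(2)[OF lim \<open>a < 0\<close>] by (rule eventually_mono) (simp add: \<open>a < 0\<close>)
  qed
qed

lemma exists_sign_preserving_perturbation:
  fixes a b :: "'a \<Rightarrow> real"
  assumes "finite A"
  obtains \<delta> where "0 < \<delta>" "\<And>x. x \<in> A \<Longrightarrow> a x \<noteq> 0 \<Longrightarrow> sgn (a x + \<delta> * b x) = sgn (a x)"
proof -
  have "\<forall>x\<in>A. \<forall>\<^sub>F \<delta> in at_right 0. a x \<noteq> 0 \<longrightarrow> sgn (a x + \<delta> * b x) = sgn (a x)"
  proof
    fix x assume "x \<in> A"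
    show "\<forall>\<^sub>F \<delta> in at_right 0. a x \<noteq> 0 \<longrightarrow> sgn (a x + \<delta> * b x) = sgn (a x)"
    proof (cases "a x = 0")
      case False
      show ?thesis using eventually_sgn_add_small[OF False, of "b x"] by (rule eventually_mono) simp
    qed simp
  qed
  then have "\<forall>\<^sub>F \<delta> in at_right 0. \<forall>x\<in>A. a x \<noteq> 0 \<longrightarrow> sgn (a x + \<delta> * b x) = sgn (a x)"
    by (rule eventually_ball_finite[OF assms])
  with eventually_at_right_less
  have "\<forall>\<^sub>F \<delta> in at_right 0. 0 < \<delta> \<and> (\<forall>x\<in>A. a x \<noteq> 0 \<longrightarrow> sgn (a x + \<delta> * b x) = sgn (a x))"
    by (rule eventually_conj)
  then show thesis using that eventually_happens'[OF trivial_limit_at_right_real] by blast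
qed

section \<open>Flat triangulations\<close>

context
  fixes g :: nat and Tris :: "nat set" and hol :: "hedge \<Rightarrow> complex" and glue :: "hedge \<Rightarrow> hedge"
  assumes flat: "flat_triangulation g Tris hol glue"
begin

lemma finite_Tris: "finite Tris"
  using flat by (simp add: flat_triangulation_def)

lemma triangle_closed: "t \<in> Tris \<Longrightarrow> hol (t,0) + hol (t,1) + hol (t,2) = 0"
  using flat by (simp add: flat_triangulation_def)

lemma triangle_ccw: "t \<in> Tris \<Longrightarrow> 0 < Im (cnj (hol (t,0)) * hol (t,1))"
  using flat by (simp add: flat_triangulation_def)

lemma glue_in_hedges: "h \<in> hedges Tris \<Longrightarrow> glue h \<in> hedges Tris"
  using flat by (simp add: flat_triangulation_def)

lemma glue_glue: "h \<in> hedges Tris \<Longrightarrow> glue (glue h) = h"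
  using flat by (simp add: flat_triangulation_def)

lemma hol_glue: "h \<in> hedges Tris \<Longrightarrow> hol (glue h) = - hol h"
  using flat by (simp add: flat_triangulation_def)

lemma Im_cnj_prv_pos:
  assumes "h \<in> hedges Tris"
  shows "0 < Im (cnj (hol (prv h)) * hol h)"
  using assms
proof (cases rule: hedges_cases)
  case (1 t)
  then show ?thesis using triangle_orientation(2)[OF triangle_closed triangle_ccw] by (simp add: prv_simps)
next
  case (2 t)
  then show ?thesis using triangle_ccw unfolding \<open>h = (t,1)\<close> prv_simps by blast
next
  case (3 t)
  then show ?thesis using triangle_orientation(1)[OF triangle_closed triangle_ccw] by (simp add: prv_simps)
qed

lemma hol_nonzero: "h \<in> hedges Tris \<Longrightarrow> hol h \<noteq> 0"
  using Im_cnj_prv_pos by fastforce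

lemma corner_angle_bounds: "h \<in> hedges Tris \<Longrightarrow> 0 < corner_angle hol h \<and> corner_angle hol h < pi"
  unfolding corner_angle_def using Arg_neg_divide_bounds Im_cnj_prv_pos by blast

lemma triangle_angle_sum:
  assumes "t \<in> Tris"
  shows "corner_angle hol (t,0) + corner_angle hol (t,1) + corner_angle hol (t,2) = pi"
  unfolding corner_angle_def prv_simps
  using Arg_triangle_sum[OF triangle_closed[OF assms] triangle_ccw[OF assms]] .

lemma sum_corner_angles: "(\<Sum>h\<in>hedges Tris. corner_angle hol h) = pi * card Tris"
proof -
  have "(\<Sum>h\<in>hedges Tris. corner_angle hol h) =
      (\<Sum>t\<in>Tris. corner_angle hol (t,0) + corner_angle hol (t,1) + corner_angle hol (t,2))"
    by (simp add: hedges_def sum.cartesian_product' add.assoc)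
  also have "\<dots> = (\<Sum>t\<in>Tris. pi)" using triangle_angle_sum by (rule sum.cong[OF refl])
  finally show ?thesis by simp
qed

lemma bij_rot: "bij_betw (rot glue) (hedges Tris) (hedges Tris)"
proof -
  have "rot glue ` hedges Tris \<subseteq> hedges Tris"
    by (rule image_subsetI) (simp add: rot_def glue_in_hedges nxt_in_hedges)
  moreover have "inj_on (rot glue) (hedges Tris)"
  proof (rule inj_onI)
    fix x y assume "x \<in> hedges Tris" "y \<in> hedges Tris" "rot glue x = rot glue y"
    then have "prv (nxt (glue x)) = prv (nxt (glue y))" "glue x \<in> hedges Tris" "glue y \<in> hedges Tris"
      using glue_in_hedges by (auto simp: rot_def)
    then have "glue (glue x) = glue (glue y)" using prv_nxt by metis
    then show "x = y" using \<open>x \<in> hedges Tris\<close> \<open>y \<in> hedges Tris\<close> glue_glue by simp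
  qed
  ultimately show ?thesis
    using finite_hedges[OF finite_Tris] by (simp add: bij_betw_def endo_inj_surj)
qed

lemma hol_prv_rot:
  assumes "h \<in> hedges Tris"
  shows "hol (prv (rot glue h)) = - hol h"
  using prv_nxt[OF glue_in_hedges[OF assms]] hol_glue[OF assms] by (simp add: rot_def)

lemma cone_angle_ge_4pi:
  assumes C: "C \<in> vertex_classes Tris glue"
  shows "4 * pi \<le> cone_angle hol C"
proof -
  let ?R = "(step_rel (rot glue) (hedges Tris))\<^sup>*"
  obtain x where x: "x \<in> hedges Tris" and C_eq: "C = ?R `` {x}"
    using C by (auto simp: vertex_classes_step_rel elim: quotientE)
  have C_sub: "C \<subseteq> hedges Tris"
    unfolding C_eq using step_rel_class_subset[OF bij_rot x] .
  have fin: "finite C" using C_sub finite_hedges[OF finite_Tris] finite_subset by blast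
  have "rot glue y \<in> C" if "y \<in> C" for y
  proof -
    have "(y, rot glue y) \<in> step_rel (rot glue) (hedges Tris)"
      using C_sub that by (auto simp: step_rel_iff)
    then show ?thesis using that rtrancl_into_rtrancl[of x y] by (simp add: C_eq)
  qed
  then have "rot glue ` C \<subseteq> C" by blast
  then have rot_C: "rot glue ` C = C"
    using fin inj_on_subset[OF bij_betw_imp_inj_on[OF bij_rot] C_sub] by (simp add: endo_inj_surj)
  \<comment> \<open>rotating around the vertex, each corner ratio telescopes against the next one\<close>
  have "(\<Prod>h\<in>C. - hol (prv h)) = (\<Prod>h\<in>rot glue ` C. - hol (prv h))" using rot_C by simp
  also have "\<dots> = (\<Prod>h\<in>C. - hol (prv (rot glue h)))"
    using prod.reindex[OF inj_on_subset[OF bij_betw_imp_inj_on[OF bij_rot] C_sub]] by simp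
  also have "\<dots> = (\<Prod>h\<in>C. hol h)" using C_sub hol_prv_rot by (intro prod.cong) auto
  finally have "(\<Prod>h\<in>C. - hol (prv h)) / (\<Prod>h\<in>C. hol h) = 1"
    using fin C_sub hol_nonzero by (auto simp: prod_zero_iff)
  then have "(\<Prod>h\<in>C. - hol (prv h) / hol h) = 1" by (simp only: prod_dividef)
  moreover have "- hol (prv h) / hol h \<noteq> 0" if "h \<in> C" for h
    using corner_angle_bounds[of h] C_sub that by (auto simp: corner_angle_def Arg_zero)
  ultimately have "cis (cone_angle hol C) = 1"
    unfolding cone_angle_def corner_angle_def using cis_sum_Arg[OF fin] by simp
  then obtain n :: int where n: "cone_angle hol C = of_int n * (2 * pi)"
    using cis_eq_1_iff by blast
  have "0 < cone_angle hol C"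
    unfolding cone_angle_def using corner_angle_bounds C_sub fin C_eq x
    by (intro sum_pos) auto
  moreover have "cone_angle hol C \<noteq> 2 * pi" using flat C by (simp add: flat_triangulation_def)
  ultimately have "2 \<le> n" using n by (simp add: zero_less_mult_iff)
  then show ?thesis using n by simp
qed

lemma card_vertex_classes_le: "4 * card (vertex_classes Tris glue) \<le> card Tris"
proof -
  let ?V = "vertex_classes Tris glue"
  have "real (card ?V) * (4 * pi) \<le> (\<Sum>C\<in>?V. cone_angle hol C)"
    by (rule sum_bounded_below) (rule cone_angle_ge_4pi)
  also have "\<dots> = (\<Sum>h\<in>hedges Tris. corner_angle hol h)"
    unfolding cone_angle_def vertex_classes_step_rel
    by (rule sum_step_rel_classes[OF bij_rot finite_hedges[OF finite_Tris]])
  also have "\<dots> = pi * card Tris" by (rule sum_corner_angles)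
  finally have "real (4 * card ?V) * pi \<le> real (card Tris) * pi" by (simp add: algebra_simps)
  then show ?thesis by (simp add: mult_le_cancel_right)
qed

lemma card_Tris_le: "card Tris \<le> 8 * g"
proof -
  have "int (card (vertex_classes Tris glue)) - int (card (edges Tris glue)) + int (card Tris) = 2 - 2 * int g"
    using flat by (simp add: flat_triangulation_def)
  moreover have "4 * card (vertex_classes Tris glue) \<le> card Tris" by (rule card_vertex_classes_le)
  moreover have "3 * card Tris \<le> 2 * card (edges Tris glue)"
    by (rule three_card_le_two_card_edges[OF finite_Tris])
  ultimately show ?thesis by linarith
qed

lemma exists_tilted_x_cocycle:
  obtains L where "nonvanishing_cocycle Tris glue L"
    and "\<And>h. h \<in> hedges Tris \<Longrightarrow> 0 < L h \<Longrightarrow> 0 \<le> Re (hol h)"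
proof -
  obtain \<delta> where "0 < \<delta>" and sgn_L:
    "\<And>h. h \<in> hedges Tris \<Longrightarrow> Re (hol h) \<noteq> 0 \<Longrightarrow> sgn (Re (hol h) + \<delta> * Im (hol h)) = sgn (Re (hol h))"
    using exists_sign_preserving_perturbation[OF finite_hedges[OF finite_Tris],
        where a = "\<lambda>h. Re (hol h)" and b = "\<lambda>h. Im (hol h)"]
    by blast
  \<comment> \<open>the x-component after the shear (x, y) \<mapsto> (x + \<delta> y, y): it keeps the sign of every
    non-vertical side and makes the vertical ones non-vertical\<close>
  define L where "L h = Re (hol h) + \<delta> * Im (hol h)" for h
  have L_nonzero: "L h \<noteq> 0" if "h \<in> hedges Tris" for h
  proof (cases "Re (hol h) = 0")
    case True
    then have "Im (hol h) \<noteq> 0" using hol_nonzero[OF that] by (simp add: complex_eq_iff)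
    then show ?thesis using True \<open>0 < \<delta>\<close> by (simp add: L_def)
  next
    case False
    then have "sgn (L h) \<noteq> 0" using sgn_L[OF that False] by (simp add: L_def sgn_zero_iff)
    then show ?thesis by auto
  qed
  have L_closed: "L (t,0) + L (t,1) + L (t,2) = 0" if "t \<in> Tris" for t
  proof -
    let ?s = "hol (t,0) + hol (t,1) + hol (t,2)"
    have "L (t,0) + L (t,1) + L (t,2) = Re ?s + \<delta> * Im ?s" by (simp add: L_def algebra_simps)
    then show ?thesis unfolding triangle_closed[OF that] by simp
  qed
  have "nonvanishing_cocycle Tris glue L"
  proof
    show "finite Tris" by (rule finite_Tris)
  next
    fix h assume h: "h \<in> hedges Tris"
    show "glue h \<in> hedges Tris" by (rule glue_in_hedges[OF h])
    show "glue (glue h) = h" by (rule glue_glue[OF h])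
    show "L (glue h) = - L h" using hol_glue[OF h] by (simp add: L_def)
    show "L h \<noteq> 0" by (rule L_nonzero[OF h])
  next
    fix t assume "t \<in> Tris"
    then show "L (t,0) + L (t,1) + L (t,2) = 0" by (rule L_closed)
  qed
  moreover have "0 \<le> Re (hol h)" if "h \<in> hedges Tris" "0 < L h" for h
  proof (rule ccontr)
    assume "\<not> 0 \<le> Re (hol h)"
    then have "sgn (L h) = - 1" using sgn_L[OF that(1)] by (simp add: L_def)
    then show False using that(2) by simp
  qed
  ultimately show thesis using that by blast
qed

lemma rightward_multicurve:
  assumes W: "W \<subseteq> edges Tris glue"
  obtains \<Delta> where "transverse_multicurve Tris glue \<Delta>"
    and "\<And>e. e \<in> W \<Longrightarrow> \<exists>h0\<in>e. 0 \<le> Re (hol h0) \<and> crossing_exits glue \<Delta> e = {h0}"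
    and "\<And>e. e \<in> edges Tris glue \<Longrightarrow> inter_num \<Delta> e \<le> int (48 * g)"
proof -
  obtain L where cocycle: "nonvanishing_cocycle Tris glue L"
    and rightward: "\<And>h. h \<in> hedges Tris \<Longrightarrow> 0 < L h \<Longrightarrow> 0 \<le> Re (hol h)"
    using exists_tilted_x_cocycle by blast
  interpret nonvanishing_cocycle Tris glue L by (rule cocycle)
  obtain \<Delta> where \<Delta>: "transverse_multicurve Tris glue \<Delta>"
    and exits: "\<forall>e\<in>W. \<exists>h0\<in>e. 0 < L h0 \<and> crossing_exits glue \<Delta> e = {h0}"
    and crossings: "\<forall>e\<in>edges Tris glue. inter_num \<Delta> e \<le> 2 * int (card W)"
    by (rule positive_multicurve[OF W])
  have "card W \<le> 3 * card Tris"
    using card_mono[OF finite_edges[OF finite_T] W] card_edges_le[OF finite_T, of glue] by linarith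
  then have "2 * int (card W) \<le> int (48 * g)" using card_Tris_le by linarith
  then have "inter_num \<Delta> e \<le> int (48 * g)" if "e \<in> edges Tris glue" for e
    using crossings that by fastforce
  moreover have "\<exists>h0\<in>e. 0 \<le> Re (hol h0) \<and> crossing_exits glue \<Delta> e = {h0}" if e: "e \<in> W" for e
  proof -
    obtain h0 where "h0 \<in> e" "0 < L h0" "crossing_exits glue \<Delta> e = {h0}" using exits e by blast
    moreover have "h0 \<in> hedges Tris" using edge_subset_hedges W e \<open>h0 \<in> e\<close> by blast
    ultimately show ?thesis using rightward by blast
  qed
  ultimately show thesis using that \<Delta> by blast
qed

end

theorem lemma8p9:
  fixes g :: nat
  shows "\<exists>n::nat. \<forall>Tris hol glue W.
           flat_triangulation g Tris hol glue \<and> W \<subseteq> edges Tris glue \<longrightarrow>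
           (\<exists>\<Delta>::multicurve.
              transverse_multicurve Tris glue \<Delta> \<and>
              (\<forall>e\<in>W. crossing_exits glue \<Delta> e \<noteq> {}) \<and>
              (\<forall>e\<in>W. (\<forall>h\<in>e. Re (hol h) \<noteq> 0) \<longrightarrow>
                        (\<forall>x\<in>crossing_exits glue \<Delta> e. Re (hol x) > 0)) \<and>
              (\<forall>e\<in>W. (\<forall>h\<in>e. Re (hol h) = 0) \<longrightarrow>
                        (\<exists>h0\<in>e. crossing_exits glue \<Delta> e = {h0})) \<and>
              (\<forall>e\<in>edges Tris glue. inter_num \<Delta> e \<le> int n))"
proof (intro exI[of _ "48 * g"] allI impI, elim conjE)
  fix Tris hol glue W
  assume flat: "flat_triangulation g Tris hol glue" and W: "W \<subseteq> edges Tris glue"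
  obtain \<Delta> where \<Delta>: "transverse_multicurve Tris glue \<Delta>"
    and side: "\<And>e. e \<in> W \<Longrightarrow> \<exists>h0\<in>e. 0 \<le> Re (hol h0) \<and> crossing_exits glue \<Delta> e = {h0}"
    and bound: "\<And>e. e \<in> edges Tris glue \<Longrightarrow> inter_num \<Delta> e \<le> int (48 * g)"
    using rightward_multicurve[OF flat W] by blast
  have nonempty: "crossing_exits glue \<Delta> e \<noteq> {}" if "e \<in> W" for e
    using side[OF that] by blast
  have nonvertical: "Re (hol x) > 0"
    if "e \<in> W" "\<forall>h\<in>e. Re (hol h) \<noteq> 0" "x \<in> crossing_exits glue \<Delta> e" for e x
    using side[OF that(1)] that(2,3) by fastforce
  have vertical: "\<exists>h0\<in>e. crossing_exits glue \<Delta> e = {h0}" if "e \<in> W" for e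
    using side[OF that] by blast
  show "\<exists>\<Delta>. transverse_multicurve Tris glue \<Delta> \<and>
              (\<forall>e\<in>W. crossing_exits glue \<Delta> e \<noteq> {}) \<and>
              (\<forall>e\<in>W. (\<forall>h\<in>e. Re (hol h) \<noteq> 0) \<longrightarrow>
                        (\<forall>x\<in>crossing_exits glue \<Delta> e. Re (hol x) > 0)) \<and>
              (\<forall>e\<in>W. (\<forall>h\<in>e. Re (hol h) = 0) \<longrightarrow>
                        (\<exists>h0\<in>e. crossing_exits glue \<Delta> e = {h0})) \<and>
              (\<forall>e\<in>edges Tris glue. inter_num \<Delta> e \<le> int (48 * g))"
    using \<Delta> nonempty nonvertical vertical bound by blast
qed

end
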